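(* For a permutation class $\mathcal{C}$ the following are equivalent: (a) $\mathcal{C}$ has unbounded horizontal path-width; (b) $\mathcal{C}$ contains horizontal alternations of arbitrarily large length; (c) $\mathcal{C}$ contains a horizontal monotone juxtaposition as a subclass.
   Context: Permutations of length $n$ are identified with their diagrams $\{(i,\pi_i)\}$; a permutation class is a set of permutations closed under containment (pattern containment: some subsequence in the same relative order). Intervalicity of $A\subseteq[n]$ is the least number of disjoint integer intervals with union $A$; the grid-complexity of a point set is the maximum of the intervalicities of its projections onto the two axes. The horizontal path-width of $\pi$ is the maximum over $i\in[n]$ of the grid-complexity of $\{(1,\pi_1),\dots,(i,\pi_i)\}$; a class has unbounded horizontal path-width if these values are unbounded over its members. A permutation $\pi$ is a horizontal alternation if there are no indices $i<j$ with $\pi_i$ odd and $\pi_j$ even (all even entries precede all odd entries). $\mathrm{Inc}$, $\mathrm{Dec}$ are the classes of increasing and decreasing permutations. A horizontal monotone juxtaposition is a grid class $\mathrm{Grid}(\mathcal{C}_1\ \mathcal{C}_2)$ of a $2\times1$ gridding matrix with $\mathcal{C}_1,\mathcal{C}_2\in\{\mathrm{Inc},\mathrm{Dec}\}$, i.e., the class of permutations $\pi$ of length $n$ for which there is $m\in\{0,\dots,n\}$ such that $\pi_1,\dots,\pi_m$ is a pattern in $\mathcal{C}_1$ and $\pi_{m+1},\dots,\pi_n$ is a pattern in $\mathcal{C}_2$. *)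

theory Defs
  imports Main
begin

(* A permutation of length n is a list of the values 1..n, each exactly once;
   entry pi!(i-1) is pi_i (positions are 1-based in the paper). *)
definition is_perm :: "nat list \<Rightarrow> bool" where
  "is_perm p \<longleftrightarrow> distinct p \<and> set p = {1..length p}"

definition contains :: "nat list \<Rightarrow> nat list \<Rightarrow> bool" where
  "contains p s \<longleftrightarrow> (\<exists>f :: nat \<Rightarrow> nat.
      (\<forall>i j. i < j \<and> j < length s \<longrightarrow> f i < f j) \<and>
      (\<forall>i < length s. f i < length p) \<and>
      (\<forall>i < length s. \<forall>j < length s. (p ! f i < p ! f j \<longleftrightarrow> s ! i < s ! j)))"

definition perm_class :: "nat list set \<Rightarrow> bool" where
  "perm_class C \<longleftrightarrow> (\<forall>p \<in> C. is_perm p) \<and>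
     (\<forall>p \<in> C. \<forall>s. is_perm s \<and> contains p s \<longrightarrow> s \<in> C)"

definition intervalicity :: "nat set \<Rightarrow> nat" where
  "intervalicity A = (LEAST k. \<exists>I :: nat \<Rightarrow> nat \<times> nat.
      (\<Union>i<k. {fst (I i)..snd (I i)}) = A \<and>
      (\<forall>i<k. \<forall>j<k. i \<noteq> j \<longrightarrow> {fst (I i)..snd (I i)} \<inter> {fst (I j)..snd (I j)} = {}))"

definition grid_complexity :: "(nat \<times> nat) set \<Rightarrow> nat" where
  "grid_complexity P = max (intervalicity (fst ` P)) (intervalicity (snd ` P))"

definition prefix_points :: "nat list \<Rightarrow> nat \<Rightarrow> (nat \<times> nat) set" where
  "prefix_points p i = {(j, p ! (j - 1)) | j. 1 \<le> j \<and> j \<le> i}"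

definition hpw :: "nat list \<Rightarrow> nat" where
  "hpw p = Max (insert 0 ((\<lambda>i. grid_complexity (prefix_points p i)) ` {1..length p}))"

definition unbounded_hpw :: "nat list set \<Rightarrow> bool" where
  "unbounded_hpw C \<longleftrightarrow> (\<forall>k. \<exists>p \<in> C. hpw p > k)"

definition horizontal_alternation :: "nat list \<Rightarrow> bool" where
  "horizontal_alternation p \<longleftrightarrow>
     (\<nexists>i j. i < j \<and> j < length p \<and> odd (p ! i) \<and> even (p ! j))"

datatype mono_kind = Inc | Dec

(* a sequence is a pattern in Inc (resp. Dec) iff it is increasing (resp. decreasing) *)
fun mono_seq :: "mono_kind \<Rightarrow> nat list \<Rightarrow> bool" where
  "mono_seq Inc xs = sorted_wrt (<) xs"
| "mono_seq Dec xs = sorted_wrt (>) xs"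

definition juxtaposition :: "mono_kind \<Rightarrow> mono_kind \<Rightarrow> nat list set" where
  "juxtaposition c1 c2 = {p. is_perm p \<and>
      (\<exists>m \<le> length p. mono_seq c1 (take m p) \<and> mono_seq c2 (drop m p))}"

end

theory Submission
  imports Defs
begin

text \<open>A long horizontal alternation has a prefix consisting of all its even values, a set without
two consecutive numbers, so that prefix has large intervalicity. Conversely, if some prefix
\<open>{\<pi>\<^sub>1, \<dots>, \<pi>\<^sub>i}\<close> splits into many maximal runs of values, then every run start \<open>v \<ge> 2\<close> occurs
among the first \<open>i\<close> entries while \<open>v - 1\<close> occurs after them; these pairs of points are ordered
blockwise by value. Two applications of the Erdos--Szekeres argument make the left points and the
right points monotone, which embeds every short permutation of some monotone juxtaposition, and
since there are only four juxtapositions one of them lies entirely in the class. Finally, every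
monotone juxtaposition contains the alternations "evens, then odds".\<close>

section \<open>Intervalicity and maximal runs\<close>

definition interval_decomposition :: "nat set \<Rightarrow> nat \<Rightarrow> (nat \<Rightarrow> nat \<times> nat) \<Rightarrow> bool" where
  "interval_decomposition V k I \<longleftrightarrow> (\<Union>i<k. {fst (I i)..snd (I i)}) = V \<and>
     (\<forall>i<k. \<forall>j<k. i \<noteq> j \<longrightarrow> {fst (I i)..snd (I i)} \<inter> {fst (I j)..snd (I j)} = {})"

lemma intervalicity_eq_Least: "intervalicity V = (LEAST k. \<exists>I. interval_decomposition V k I)"
  unfolding intervalicity_def interval_decomposition_def ..

lemma intervalicity_empty [simp]: "intervalicity {} = 0"
  unfolding intervalicity_eq_Least interval_decomposition_def by (rule Least_eq_0) simp

lemma intervalicity_atLeastAtMost_le: "intervalicity {a..b} \<le> 1"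
  unfolding intervalicity_eq_Least interval_decomposition_def
  by (rule Least_le) (rule exI[of _ "\<lambda>_. (a, b)"], auto)

lemma interval_decomposition_of_family:
  assumes "finite J" "(\<Union>j\<in>J. {lo j..hi j}) = V"
    and "\<forall>j\<in>J. \<forall>j'\<in>J. j \<noteq> j' \<longrightarrow> {lo j..hi j} \<inter> {lo j'..hi j'} = {}"
  shows "\<exists>I. interval_decomposition V (card J) I"
proof -
  obtain h where h: "bij_betw h {..<card J} J"
    using ex_bij_betw_nat_finite[OF assms(1)] by (auto simp: atLeast0LessThan)
  have "(\<Union>i<card J. {lo (h i)..hi (h i)}) = V"
  proof -
    have "(\<Union>i<card J. {lo (h i)..hi (h i)}) = (\<Union>j\<in>h ` {..<card J}. {lo j..hi j})" by simp
    then show ?thesis using assms(2) bij_betw_imp_surj_on[OF h] by simp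
  qed
  moreover have "{lo (h i)..hi (h i)} \<inter> {lo (h j)..hi (h j)} = {}"
    if "i < card J" "j < card J" "i \<noteq> j" for i j
  proof -
    have "h i \<in> J" "h j \<in> J" "h i \<noteq> h j"
      using that h by (auto simp: bij_betw_def inj_on_def)
    then show ?thesis using assms(3) by blast
  qed
  ultimately show ?thesis
    unfolding interval_decomposition_def by (intro exI[of _ "\<lambda>i. (lo (h i), hi (h i))"]) auto
qed

text \<open>The disjunct \<open>v = 0\<close> is needed because \<open>0 - 1 = 0\<close> in \<open>nat\<close>.\<close>

definition run_starts :: "nat set \<Rightarrow> nat set" where
  "run_starts V = {v \<in> V. v = 0 \<or> v - 1 \<notin> V}"

definition run_end :: "nat set \<Rightarrow> nat \<Rightarrow> nat" where
  "run_end V a = (LEAST e. a \<le> e \<and> Suc e \<notin> V)"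

lemma run_end:
  assumes "finite V"
  shows "a \<le> run_end V a" "Suc (run_end V a) \<notin> V"
    and "a \<in> V \<Longrightarrow> x \<in> {a..run_end V a} \<Longrightarrow> x \<in> V"
proof -
  obtain B where "\<forall>v\<in>V. v < B" using assms finite_nat_set_iff_bounded by blast
  then have ex: "\<exists>e. a \<le> e \<and> Suc e \<notin> V" by (intro exI[of _ "a + B"]) auto
  show "a \<le> run_end V a" "Suc (run_end V a) \<notin> V"
    using LeastI_ex[OF ex] unfolding run_end_def by auto
  have inside: "Suc x \<in> V" if "a \<le> x" "x < run_end V a" for x
    using not_less_Least[of x "\<lambda>e. a \<le> e \<and> Suc e \<notin> V"] that unfolding run_end_def by auto
  show "x \<in> V" if "a \<in> V" "x \<in> {a..run_end V a}"
    using that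
  proof (induction x)
    case (Suc x)
    then show ?case using inside[of x] by (cases "a \<le> x") (auto simp: le_Suc_eq)
  qed simp
qed

lemma runs_cover:
  assumes "finite V"
  shows "(\<Union>a\<in>run_starts V. {a..run_end V a}) = V"
proof
  show "(\<Union>a\<in>run_starts V. {a..run_end V a}) \<subseteq> V"
    using run_end(3)[OF assms] unfolding run_starts_def by blast
  have "\<exists>a\<in>run_starts V. v \<in> {a..run_end V a}" if "v \<in> V" for v
    using that
  proof (induction v)
    case 0
    then show ?case using run_end(1)[OF assms, of 0] unfolding run_starts_def by auto
  next
    case (Suc w)
    show ?case
    proof (cases "w \<in> V")
      case True
      then obtain a where "a \<in> run_starts V" "w \<in> {a..run_end V a}" using Suc.IH by blast
      moreover have "w \<noteq> run_end V a" using run_end(2)[OF assms, of a] Suc.prems by auto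
      ultimately show ?thesis by (intro bexI[of _ a]) auto
    next
      case False
      then show ?thesis using Suc.prems run_end(1)[OF assms, of "Suc w"] unfolding run_starts_def by auto
    qed
  qed
  then show "V \<subseteq> (\<Union>a\<in>run_starts V. {a..run_end V a})" by blast
qed

lemma runs_disjoint:
  assumes "finite V" "a \<in> run_starts V" "a' \<in> run_starts V" "a < a'"
  shows "{a..run_end V a} \<inter> {a'..run_end V a'} = {}"
proof (rule ccontr)
  assume "\<not> ?thesis"
  then have "a' - 1 \<in> {a..run_end V a}" using assms(4) by auto
  then have "a' - 1 \<in> V" using run_end(3)[OF assms(1)] assms(2) unfolding run_starts_def by blast
  then show False using assms unfolding run_starts_def by auto
qed

lemma interval_decomposition_runs:
  assumes "finite V"
  shows "\<exists>I. interval_decomposition V (card (run_starts V)) I"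
proof (rule interval_decomposition_of_family)
  show "finite (run_starts V)" using assms unfolding run_starts_def by simp
  show "\<forall>a\<in>run_starts V. \<forall>a'\<in>run_starts V. a \<noteq> a' \<longrightarrow>
      {a..run_end V a} \<inter> {a'..run_end V a'} = {}"
    using runs_disjoint[OF assms] by (metis inf_commute linorder_neqE_nat)
qed (rule runs_cover[OF assms])

lemma intervalicity_le_card_run_starts:
  "finite V \<Longrightarrow> intervalicity V \<le> card (run_starts V)"
  unfolding intervalicity_eq_Least by (rule Least_le) (rule interval_decomposition_runs)

lemma card_le_intervalicity:
  assumes "finite V" "\<forall>v\<in>V. Suc v \<notin> V"
  shows "card V \<le> intervalicity V"
proof -
  obtain I where I: "interval_decomposition V (intervalicity V) I"
    using LeastI_ex[of "\<lambda>k. \<exists>I. interval_decomposition V k I"] interval_decomposition_runs[OF assms(1)]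
    unfolding intervalicity_eq_Least by blast
  let ?J = "\<lambda>i. {fst (I i)..snd (I i)}"
  have "card (?J i) \<le> 1" if "i < intervalicity V" for i
  proof (rule ccontr)
    assume "\<not> ?thesis"
    then have "fst (I i) \<in> ?J i" "Suc (fst (I i)) \<in> ?J i" by auto
    moreover have "?J i \<subseteq> V" using I that unfolding interval_decomposition_def by blast
    ultimately show False using assms(2) by blast
  qed
  then have "(\<Sum>i<intervalicity V. card (?J i)) \<le> intervalicity V"
    using sum_mono[of "{..<intervalicity V}" "\<lambda>i. card (?J i)" "\<lambda>_. 1"] by simp
  moreover have "card V \<le> (\<Sum>i<intervalicity V. card (?J i))"
    using card_UN_le[of "{..<intervalicity V}" ?J] I unfolding interval_decomposition_def by simp
  ultimately show ?thesis by linarith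
qed

section \<open>Horizontal path-width through prefix values\<close>

lemma grid_complexity_prefix_points:
  assumes "i \<le> length p"
  shows "grid_complexity (prefix_points p i) = max (intervalicity {1..i}) (intervalicity (set (take i p)))"
proof -
  have points: "prefix_points p i = (\<lambda>j. (j, p ! (j - 1))) ` {1..i}"
    unfolding prefix_points_def by auto
  have "{1..i} = Suc ` {0..<i}"
    by (simp add: image_Suc_atLeastLessThan atLeastLessThanSuc_atLeastAtMost)
  then have "(\<lambda>j. p ! (j - 1)) ` {1..i} = nth p ` {0..<i}"
    by (simp only: image_image) simp
  then have "snd ` prefix_points p i = set (take i p)"
    using nth_image[OF assms] unfolding points by (simp add: image_image)
  moreover have "fst ` prefix_points p i = {1..i}" unfolding points by (simp add: image_image)
  ultimately show ?thesis unfolding grid_complexity_def by simp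
qed

lemma unbounded_hpw_iff_prefix_intervalicity:
  "unbounded_hpw C \<longleftrightarrow> (\<forall>k. \<exists>p\<in>C. \<exists>i\<le>length p. k < intervalicity (set (take i p)))"
proof
  assume unbounded: "unbounded_hpw C"
  show "\<forall>k. \<exists>p\<in>C. \<exists>i\<le>length p. k < intervalicity (set (take i p))"
  proof
    fix k
    obtain p where "p \<in> C" "Suc k < hpw p" using unbounded unfolding unbounded_hpw_def by blast
    then obtain i where "i \<in> {1..length p}" "Suc k < grid_complexity (prefix_points p i)"
      unfolding hpw_def by (subst (asm) Max_gr_iff) auto
    then have "k < intervalicity (set (take i p))"
      using intervalicity_atLeastAtMost_le[of 1 i] grid_complexity_prefix_points[of i p] by auto
    then show "\<exists>p\<in>C. \<exists>i\<le>length p. k < intervalicity (set (take i p))"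
      using \<open>p \<in> C\<close> \<open>i \<in> {1..length p}\<close> by auto
  qed
next
  assume large: "\<forall>k. \<exists>p\<in>C. \<exists>i\<le>length p. k < intervalicity (set (take i p))"
  show "unbounded_hpw C" unfolding unbounded_hpw_def
  proof
    fix k
    obtain p i where "p \<in> C" "i \<le> length p" "k < intervalicity (set (take i p))"
      using large by blast
    moreover have "i \<noteq> 0" using calculation by (intro notI) simp
    ultimately have "k < grid_complexity (prefix_points p i)" "i \<in> {1..length p}"
      using grid_complexity_prefix_points by auto
    then have "k < hpw p" unfolding hpw_def by (subst Max_gr_iff) auto
    then show "\<exists>p\<in>C. k < hpw p" using \<open>p \<in> C\<close> by blast
  qed
qed

section \<open>An exponential Erdos--Szekeres bound\<close>

fun mono_rel :: "mono_kind \<Rightarrow> nat \<Rightarrow> nat \<Rightarrow> bool" where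
  "mono_rel Inc = (<)"
| "mono_rel Dec = (\<lambda>x y. y < x)"

lemma mono_seq_iff_sorted_wrt: "mono_seq c xs \<longleftrightarrow> sorted_wrt (mono_rel c) xs"
  by (cases c) simp_all

lemma monotone_on_insert_min:
  fixes s :: nat
  assumes "monotone_on T (<) r g" "\<forall>t\<in>T. s < t \<and> r (g s) (g t)"
  shows "monotone_on (insert s T) (<) r g"
proof (rule monotone_onI)
  fix x y assume "x \<in> insert s T" "y \<in> insert s T" "x < y"
  then show "r (g x) (g y)"
    using assms(2) monotone_onD[OF assms(1)] by auto
qed

lemma monotone_subset_extend_by_min:
  fixes s :: nat
  assumes "finite T" "T \<subseteq> {t \<in> S. s < t \<and> r (g s) (g t)}" "s \<in> S"
    and "a - 1 \<le> card T" "monotone_on T (<) r g"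
  shows "\<exists>T'\<subseteq>S. a \<le> card T' \<and> monotone_on T' (<) r g"
proof (intro exI conjI)
  show "insert s T \<subseteq> S" using assms(2,3) by blast
  have "s \<notin> T" using assms(2) by auto
  then show "a \<le> card (insert s T)" using assms(1,4) by simp
  show "monotone_on (insert s T) (<) r g"
    using assms(2,5) by (intro monotone_on_insert_min) auto
qed

lemma exponential_erdos_szekeres:
  fixes g :: "nat \<Rightarrow> nat"
  assumes "finite S" "inj_on g S" "2 ^ (a + b) \<le> card S"
  shows "(\<exists>T\<subseteq>S. a \<le> card T \<and> strict_mono_on T g) \<or> (\<exists>T\<subseteq>S. b \<le> card T \<and> strict_antimono_on T g)"
  using assms
proof (induction "a + b" arbitrary: a b S)
  case 0
  then show ?case by (intro disjI1 exI[of _ "{}"]) auto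
next
  case (Suc n)
  show ?case
  proof (cases "a = 0 \<or> b = 0")
    case True
    have "{} \<subseteq> S" "strict_mono_on {} g" "strict_antimono_on {} g" by simp_all
    with True show ?thesis by force
  next
    case False
    define s where "s = Min S"
    have "S \<noteq> {}" using Suc.prems(3) by auto
    then have s: "s \<in> S" "\<forall>t\<in>S. s \<le> t" using Suc.prems(1) unfolding s_def by auto
    define Up where "Up = {t \<in> S. s < t \<and> g s < g t}"
    define Down where "Down = {t \<in> S. s < t \<and> g t < g s}"
    have "t \<in> Up \<union> Down" if "t \<in> S - {s}" for t
    proof -
      have "s < t" using that s by auto
      moreover have "g t \<noteq> g s" using that s(1) Suc.prems(2) by (auto dest: inj_onD)
      ultimately show ?thesis using that unfolding Up_def Down_def by auto
    qed
    then have "S - {s} = Up \<union> Down" unfolding Up_def Down_def by auto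
    moreover have fin: "finite Up" "finite Down" using Suc.prems(1) unfolding Up_def Down_def by auto
    moreover have "Up \<inter> Down = {}" unfolding Up_def Down_def by auto
    ultimately have "card Up + card Down = card S - 1"
      using card_Un_disjoint[of Up Down] card_Diff_singleton[OF s(1)] by simp
    moreover have "(2::nat) ^ (a + b) = 2 * 2 ^ n" using Suc.hyps(2) by (metis power_Suc)
    ultimately have large: "2 ^ n \<le> card Up \<or> 2 ^ n \<le> card Down" using Suc.prems(3) by linarith
    have inj: "inj_on g Up" "inj_on g Down"
      using inj_on_subset[OF Suc.prems(2)] unfolding Up_def Down_def by auto
    have n: "n = (a - 1) + b" "n = a + (b - 1)" using False Suc.hyps(2) by auto
    from large show ?thesis
    proof
      assume "2 ^ n \<le> card Up"
      then have "(\<exists>T\<subseteq>Up. a - 1 \<le> card T \<and> strict_mono_on T g) \<or>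
          (\<exists>T\<subseteq>Up. b \<le> card T \<and> strict_antimono_on T g)"
        using Suc.hyps(1)[OF n(1) fin(1) inj(1)] n(1) by simp
      then show ?thesis
      proof (elim disjE exE conjE)
        fix T assume "T \<subseteq> Up" "a - 1 \<le> card T" "strict_mono_on T g"
        then have "\<exists>T'\<subseteq>S. a \<le> card T' \<and> strict_mono_on T' g"
          using fin(1) s(1) by (intro monotone_subset_extend_by_min) (auto simp: Up_def dest: finite_subset)
        then show ?thesis ..
      next
        fix T assume "T \<subseteq> Up" "b \<le> card T" "strict_antimono_on T g"
        then show ?thesis unfolding Up_def by blast
      qed
    next
      assume "2 ^ n \<le> card Down"
      then have "(\<exists>T\<subseteq>Down. a \<le> card T \<and> strict_mono_on T g) \<or>
          (\<exists>T\<subseteq>Down. b - 1 \<le> card T \<and> strict_antimono_on T g)"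
        using Suc.hyps(1)[OF n(2) fin(2) inj(2)] n(2) by simp
      then show ?thesis
      proof (elim disjE exE conjE)
        fix T assume "T \<subseteq> Down" "a \<le> card T" "strict_mono_on T g"
        then show ?thesis unfolding Down_def by blast
      next
        fix T assume "T \<subseteq> Down" "b - 1 \<le> card T" "strict_antimono_on T g"
        then have "\<exists>T'\<subseteq>S. b \<le> card T' \<and> strict_antimono_on T' g"
          using fin(2) s(1) by (intro monotone_subset_extend_by_min) (auto simp: Down_def dest: finite_subset)
        then show ?thesis ..
      qed
    qed
  qed
qed

lemma monotone_subset_of_some_kind:
  fixes g :: "nat \<Rightarrow> nat"
  assumes "finite S" "inj_on g S" "4 ^ m \<le> card S"
  shows "\<exists>c T. T \<subseteq> S \<and> m \<le> card T \<and> monotone_on T (<) (mono_rel c) g"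
proof -
  have "(4::nat) ^ m = 2 ^ (m + m)" by (simp add: power_add flip: power_mult_distrib)
  then have "(\<exists>T\<subseteq>S. m \<le> card T \<and> strict_mono_on T g) \<or> (\<exists>T\<subseteq>S. m \<le> card T \<and> strict_antimono_on T g)"
    using exponential_erdos_szekeres[OF assms(1,2)] assms(3) by simp
  then show ?thesis
  proof (elim disjE exE conjE)
    fix T assume "T \<subseteq> S" "m \<le> card T" "strict_mono_on T g"
    then show ?thesis by (intro exI[of _ Inc] exI[of _ T]) simp
  next
    fix T assume "T \<subseteq> S" "m \<le> card T" "strict_antimono_on T g"
    then show ?thesis by (intro exI[of _ Dec] exI[of _ T]) simp
  qed
qed

lemma mono_rel_monotone_onD:
  assumes "monotone_on A (<) (mono_rel c) g" "x \<in> A" "y \<in> A" "mono_rel c x y"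
  shows "g x < g y"
  using assms by (cases c) (auto dest: monotone_onD)

section \<open>Separated pairs of points and monotone juxtapositions\<close>

definition separated_pairs :: "nat list \<Rightarrow> nat set \<Rightarrow> (nat \<Rightarrow> nat) \<Rightarrow> (nat \<Rightarrow> nat) \<Rightarrow> bool" where
  "separated_pairs p S L R \<longleftrightarrow>
     (\<forall>s\<in>S. L s < length p \<and> R s < length p) \<and>
     (\<forall>s\<in>S. \<forall>s'\<in>S. L s < R s') \<and>
     (\<forall>s\<in>S. \<forall>s'\<in>S. s < s' \<longrightarrow> max (p ! L s) (p ! R s) < min (p ! L s') (p ! R s'))"

lemma separated_pairs_less:
  assumes "separated_pairs p S L R" "s \<in> S" "s' \<in> S" "s < s'" "x \<in> {L s, R s}" "y \<in> {L s', R s'}"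
  shows "p ! x < p ! y"
proof -
  have "max (p ! L s) (p ! R s) < min (p ! L s') (p ! R s')"
    using assms(1-4) unfolding separated_pairs_def by blast
  then show ?thesis using assms(5,6) by auto
qed

lemma separated_pairs_inj_on:
  assumes "separated_pairs p S L R"
  shows "inj_on L S" "inj_on R S"
proof -
  have "x \<noteq> y" if st: "s \<in> S" "s' \<in> S" "s \<noteq> s'" "x \<in> {L s, R s}" "y \<in> {L s', R s'}"
    for s s' x y
  proof -
    consider "s < s'" | "s' < s" using st(3) by linarith
    then have "p ! x \<noteq> p ! y"
      using separated_pairs_less[OF assms] st by cases (metis less_irrefl)+
    then show ?thesis by blast
  qed
  then show "inj_on L S" "inj_on R S" by (auto intro!: inj_onI)
qed

lemma separated_pairs_compose:
  assumes "separated_pairs p S L R" "strict_mono_on A e" "e ` A \<subseteq> S"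
  shows "separated_pairs p A (L \<circ> e) (R \<circ> e)"
proof -
  have "e s \<in> S" if "s \<in> A" for s using assms(3) that by blast
  moreover have "e s < e s'" if "s \<in> A" "s' \<in> A" "s < s'" for s s'
    using monotone_onD[OF assms(2) that] .
  ultimately show ?thesis using assms(1) unfolding separated_pairs_def comp_def by blast
qed

lemma obtain_strict_mono_into:
  assumes "finite T" "m \<le> card T"
  obtains e :: "nat \<Rightarrow> nat" where "strict_mono_on {1..m} e" "e ` {1..m} \<subseteq> T"
proof
  define xs where "xs = sorted_list_of_set T"
  have xs: "sorted_wrt (<) xs" "set xs = T" "length xs = card T"
    using assms(1) unfolding xs_def by auto
  show "strict_mono_on {1..m} (\<lambda>u. xs ! (u - 1))"
  proof (rule monotone_onI)
    fix u v assume "u \<in> {1..m}" "v \<in> {1..m}" "u < v"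
    then have "u - 1 < v - 1" "v - 1 < length xs" using xs(3) assms(2) by auto
    then show "xs ! (u - 1) < xs ! (v - 1)" using xs(1) sorted_wrt_iff_nth_less by blast
  qed
  have "xs ! (u - 1) \<in> T" if "u \<in> {1..m}" for u
    using that xs(2,3) assms(2) nth_mem[of "u - 1" xs] by auto
  then show "(\<lambda>u. xs ! (u - 1)) ` {1..m} \<subseteq> T" by blast
qed

lemma contains_juxtaposition_member:
  assumes sep: "separated_pairs p {1..m} L R"
    and L: "monotone_on {1..m} (<) (mono_rel c1) L" and R: "monotone_on {1..m} (<) (mono_rel c2) R"
    and q: "q \<in> juxtaposition c1 c2" "length q \<le> m"
  shows "contains p q"
proof -
  obtain k where k: "is_perm q" "k \<le> length q"
      "sorted_wrt (mono_rel c1) (take k q)" "sorted_wrt (mono_rel c2) (drop k q)"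
    using q(1) unfolding juxtaposition_def mono_seq_iff_sorted_wrt by blast
  have q_val: "q ! t \<in> {1..m}" if "t < length q" for t
    using k(1) q(2) nth_mem[OF that] unfolding is_perm_def by auto
  text \<open>Entry \<open>t\<close> of \<open>q\<close> goes to the left or right point of pair \<open>q ! t\<close>, by the side of the split.\<close>
  define f where "f t = (if t < k then L (q ! t) else R (q ! t))" for t
  have f_mono: "f t < f t'" if "t < t'" "t' < length q" for t t'
  proof -
    consider "t' < k" | "t < k" "k \<le> t'" | "k \<le> t" by linarith
    then show ?thesis
    proof cases
      case 1
      then have "mono_rel c1 (take k q ! t) (take k q ! t')"
        using k(3)[unfolded sorted_wrt_iff_nth_less, rule_format, of t t'] that by simp
      then have "mono_rel c1 (q ! t) (q ! t')" using 1 that by simp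
      then show ?thesis using 1 that q_val unfolding f_def by (auto intro: mono_rel_monotone_onD[OF L])
    next
      case 2
      then show ?thesis using sep q_val that unfolding f_def separated_pairs_def by auto
    next
      case 3
      have "mono_rel c2 (drop k q ! (t - k)) (drop k q ! (t' - k))"
        using k(4)[unfolded sorted_wrt_iff_nth_less, rule_format, of "t - k" "t' - k"] 3 that by simp
      moreover have "drop k q ! (t - k) = q ! t" "drop k q ! (t' - k) = q ! t'"
        using 3 that k(2) by auto
      ultimately show ?thesis using 3 that q_val k(2) unfolding f_def by (auto intro: mono_rel_monotone_onD[OF R])
    qed
  qed
  have f_val: "p ! f t < p ! f t' \<longleftrightarrow> q ! t < q ! t'" if tt: "t < length q" "t' < length q" for t t'
  proof -
    have f_in: "f u \<in> {L (q ! u), R (q ! u)}" for u unfolding f_def by simp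
    have sep_less: "p ! f u < p ! f u'" if "u < length q" "u' < length q" "q ! u < q ! u'" for u u'
      using separated_pairs_less[OF sep q_val[OF that(1)] q_val[OF that(2)] that(3) f_in f_in] .
    have "distinct q" using k(1) unfolding is_perm_def by simp
    consider "q ! t < q ! t'" | "q ! t' < q ! t" | "t = t'"
      using nth_eq_iff_index_eq[OF \<open>distinct q\<close> tt] by fastforce
    then show ?thesis using tt sep_less by cases (auto dest: less_asym)
  qed
  have f_len: "f t < length p" if "t < length q" for t
    using sep q_val[OF that] unfolding f_def separated_pairs_def by auto
  have "\<forall>i j. i < j \<and> j < length q \<longrightarrow> f i < f j"
    and "\<forall>i<length q. f i < length p"
    and "\<forall>i<length q. \<forall>j<length q. p ! f i < p ! f j \<longleftrightarrow> q ! i < q ! j"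
    using f_mono f_len f_val by simp_all
  then show ?thesis unfolding contains_def by (intro exI[of _ f] conjI)
qed

lemma separated_pairs_contain_juxtapositions:
  assumes sep: "separated_pairs p S L R" and "finite S" "4 ^ 4 ^ m \<le> card S"
  shows "\<exists>c1 c2. \<forall>q \<in> juxtaposition c1 c2. length q \<le> m \<longrightarrow> contains p q"
proof -
  obtain c1 T1 where T1: "T1 \<subseteq> S" "4 ^ m \<le> card T1" "monotone_on T1 (<) (mono_rel c1) L"
    using monotone_subset_of_some_kind[OF assms(2) separated_pairs_inj_on(1)[OF sep] assms(3)] by blast
  have "finite T1" using T1(1) assms(2) finite_subset by blast
  moreover have "inj_on R T1" using inj_on_subset[OF separated_pairs_inj_on(2)[OF sep] T1(1)] .
  ultimately obtain c2 T2 where T2: "T2 \<subseteq> T1" "m \<le> card T2" "monotone_on T2 (<) (mono_rel c2) R"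
    using monotone_subset_of_some_kind[OF _ _ T1(2)] by blast
  have "finite T2" using T2(1) \<open>finite T1\<close> finite_subset by blast
  then obtain e where e: "strict_mono_on {1..m} e" "e ` {1..m} \<subseteq> T2"
    using obtain_strict_mono_into[OF _ T2(2)] by blast
  have "separated_pairs p {1..m} (L \<circ> e) (R \<circ> e)"
    using separated_pairs_compose[OF sep e(1)] e(2) T1(1) T2(1) by blast
  moreover have "monotone_on {1..m} (<) (mono_rel c1) (L \<circ> e)"
    using monotone_on_o[OF monotone_on_subset[OF T1(3) T2(1)] e(1,2)] .
  moreover have "monotone_on {1..m} (<) (mono_rel c2) (R \<circ> e)"
    using monotone_on_o[OF T2(3) e(1,2)] .
  ultimately have "contains p q" if "q \<in> juxtaposition c1 c2" "length q \<le> m" for q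
    using contains_juxtaposition_member that by blast
  then show ?thesis by blast
qed

definition position :: "nat list \<Rightarrow> nat \<Rightarrow> nat" where
  "position p x = (SOME j. j < length p \<and> p ! j = x)"

lemma position_nth:
  assumes "x \<in> set p"
  shows "position p x < length p" "p ! position p x = x"
proof -
  have "\<exists>j. j < length p \<and> p ! j = x" using assms by (simp add: in_set_conv_nth)
  then show "position p x < length p" "p ! position p x = x"
    unfolding position_def by (metis (mono_tags, lifting) someI_ex)+
qed

lemma position_in_take:
  assumes "distinct p" "x \<in> set (take i p)"
  shows "position p x < i"
proof -
  obtain j where j: "j < i" "j < length p" "p ! j = x"
    using assms(2) by (auto simp: in_set_conv_nth)
  then have "position p x = j"
    using position_nth[of x p] nth_eq_iff_index_eq[OF assms(1)] by auto
  then show ?thesis using j(1) by simp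
qed

text \<open>The run start \<open>1\<close> is excluded because its partner \<open>0\<close> is not a value of a permutation.\<close>

lemma separated_pairs_at_run_starts:
  assumes "is_perm p" "i \<le> length p"
  defines "V \<equiv> set (take i p)"
  shows "separated_pairs p (run_starts V - {1}) (position p) (\<lambda>v. position p (v - 1))"
proof -
  have set_p: "set p = {1..length p}" and "distinct p" using assms(1) unfolding is_perm_def by auto
  have "V \<subseteq> set p" unfolding V_def by (rule set_take_subset)
  then have v: "v \<in> set p" "v - 1 \<in> set p" "2 \<le> v" "v \<in> V" "v - 1 \<notin> V"
    if "v \<in> run_starts V - {1}" for v
  proof -
    have "v \<in> V" "v \<noteq> 1" using that unfolding run_starts_def by auto
    moreover have "v \<in> {1..length p}" using \<open>v \<in> V\<close> \<open>V \<subseteq> set p\<close> set_p by blast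
    moreover have "v - 1 \<notin> V" using that calculation(3) unfolding run_starts_def by auto
    ultimately show "v \<in> set p" "v - 1 \<in> set p" "2 \<le> v" "v \<in> V" "v - 1 \<notin> V"
      using set_p by auto
  qed
  have left: "position p v < i" if "v \<in> run_starts V - {1}" for v
    using position_in_take[OF \<open>distinct p\<close>] v(4)[OF that] unfolding V_def by blast
  have right: "i \<le> position p (v - 1)" if "v \<in> run_starts V - {1}" for v
  proof (rule ccontr)
    assume "\<not> ?thesis"
    then have "p ! position p (v - 1) \<in> V"
      using position_nth[OF v(2)[OF that]] unfolding V_def by (auto simp: in_set_conv_nth)
    then show False using position_nth(2)[OF v(2)[OF that]] v(5)[OF that] by simp
  qed
  have separated: "max v (v - 1) < min v' (v' - 1)"
    if "v \<in> run_starts V - {1}" "v' \<in> run_starts V - {1}" "v < v'" for v v'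
  proof -
    have "v \<noteq> v' - 1" using v(4)[OF that(1)] v(5)[OF that(2)] by auto
    then show ?thesis using that(3) by auto
  qed
  show ?thesis
    unfolding separated_pairs_def
  proof (intro conjI ballI impI)
    fix v v' assume "v \<in> run_starts V - {1}" "v' \<in> run_starts V - {1}"
    then show "position p v < position p (v' - 1)"
      using left right less_le_trans by blast
    assume "v < v'"
    then show "max (p ! position p v) (p ! position p (v - 1)) < min (p ! position p v') (p ! position p (v' - 1))"
      using separated \<open>v \<in> _\<close> \<open>v' \<in> _\<close> position_nth(2) v(1,2) by metis
  next
    fix v assume "v \<in> run_starts V - {1}"
    then show "position p v < length p" "position p (v - 1) < length p"
      using position_nth(1) v(1,2) by blast+
  qed
qed

lemma perm_class_contains_closed:
  assumes "perm_class C" "p \<in> C" "contains p q" "is_perm q"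
  shows "q \<in> C"
  using assms unfolding perm_class_def by blast

lemma juxtaposition_subset_if_short_members:
  assumes "\<And>m. \<exists>c1 c2. \<forall>q\<in>juxtaposition c1 c2. length q \<le> m \<longrightarrow> q \<in> C"
  shows "\<exists>c1 c2. juxtaposition c1 c2 \<subseteq> C"
proof (rule ccontr)
  assume "\<not> ?thesis"
  then have "\<exists>q. q \<in> juxtaposition c1 c2 \<and> q \<notin> C" for c1 c2 by blast
  then obtain bad where bad: "bad c1 c2 \<in> juxtaposition c1 c2" "bad c1 c2 \<notin> C" for c1 c2
    by metis
  define M where "M = length (bad Inc Inc) + length (bad Inc Dec) + length (bad Dec Inc) + length (bad Dec Dec)"
  obtain c1 c2 where "\<forall>q\<in>juxtaposition c1 c2. length q \<le> M \<longrightarrow> q \<in> C" using assms by blast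
  moreover have "length (bad c1 c2) \<le> M" unfolding M_def by (cases c1; cases c2) auto
  ultimately show False using bad by blast
qed

lemma unbounded_hpw_imp_juxtaposition_subset:
  assumes C: "perm_class C" and "unbounded_hpw C"
  shows "\<exists>c1 c2. juxtaposition c1 c2 \<subseteq> C"
proof (rule juxtaposition_subset_if_short_members)
  fix m
  obtain p i where p: "p \<in> C" "i \<le> length p" and large: "Suc (4 ^ 4 ^ m) < intervalicity (set (take i p))"
    using assms(2) unfolding unbounded_hpw_iff_prefix_intervalicity by blast
  define S where "S = run_starts (set (take i p)) - {1}"
  have "is_perm p" using C p(1) unfolding perm_class_def by blast
  have "finite (run_starts (set (take i p)))" unfolding run_starts_def by simp
  then have "finite S" "card (run_starts (set (take i p))) \<le> Suc (card S)"
    unfolding S_def by (auto simp: card_Diff_singleton_if)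
  then have "intervalicity (set (take i p)) \<le> Suc (card S)"
    using intervalicity_le_card_run_starts[of "set (take i p)"] by simp
  then have "4 ^ 4 ^ m \<le> card S" using large by linarith
  then obtain c1 c2 where "\<forall>q\<in>juxtaposition c1 c2. length q \<le> m \<longrightarrow> contains p q"
    using separated_pairs_contain_juxtapositions[OF _ \<open>finite S\<close>]
      separated_pairs_at_run_starts[OF \<open>is_perm p\<close> p(2)] unfolding S_def by blast
  then have "\<forall>q\<in>juxtaposition c1 c2. length q \<le> m \<longrightarrow> q \<in> C"
    using perm_class_contains_closed[OF C p(1)] unfolding juxtaposition_def by blast
  then show "\<exists>c1 c2. \<forall>q\<in>juxtaposition c1 c2. length q \<le> m \<longrightarrow> q \<in> C" by blast
qed

fun oriented :: "mono_kind \<Rightarrow> nat list \<Rightarrow> nat list" where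
  "oriented Inc xs = xs"
| "oriented Dec xs = rev xs"

lemma set_oriented [simp]: "set (oriented c xs) = set xs"
  and length_oriented [simp]: "length (oriented c xs) = length xs"
  and distinct_oriented [simp]: "distinct (oriented c xs) = distinct xs"
  by (cases c; simp)+

lemma mono_seq_oriented: "sorted_wrt (<) xs \<Longrightarrow> mono_seq c (oriented c xs)"
  by (cases c) (simp_all add: sorted_wrt_rev)

lemma horizontal_alternation_append:
  assumes "\<forall>x\<in>set xs. even x" "\<forall>y\<in>set ys. odd y"
  shows "horizontal_alternation (xs @ ys)"
  unfolding horizontal_alternation_def
proof clarify
  fix i j assume ij: "i < j" "j < length (xs @ ys)" "odd ((xs @ ys) ! i)" "even ((xs @ ys) ! j)"
  show False
  proof (cases "i < length xs")
    case True
    then show False using ij(3) assms(1) by (simp add: nth_append)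
  next
    case False
    then have "(xs @ ys) ! j \<in> set ys" using ij(1,2) by (simp add: nth_append)
    then show False using ij(4) assms(2) by blast
  qed
qed

lemma juxtaposition_contains_alternation:
  "\<exists>p\<in>juxtaposition c1 c2. horizontal_alternation p \<and> length p = 2 * N"
proof -
  define xs where "xs = [1..<2 * N + 1]"
  have xs: "set xs = {1..2 * N}" "length xs = 2 * N" "distinct xs" "sorted_wrt (<) xs"
    unfolding xs_def by (auto simp del: upt_Suc simp add: sorted_wrt_upt)
  define evens where "evens = filter even xs"
  define odds where "odds = filter odd xs"
  define p where "p = oriented c1 evens @ oriented c2 odds"
  have "length p = 2 * N"
    using sum_length_filter_compl[of even xs] xs(2) unfolding p_def evens_def odds_def by simp
  moreover have "set p = set xs" "distinct p"
    using xs(3) unfolding p_def evens_def odds_def by auto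
  then have "is_perm p" using xs(1) \<open>length p = 2 * N\<close> unfolding is_perm_def by simp
  moreover have "mono_seq c1 (take (length evens) p)" "mono_seq c2 (drop (length evens) p)"
    using xs(4) unfolding p_def evens_def odds_def
    by (simp_all add: mono_seq_oriented sorted_wrt_filter)
  moreover have "horizontal_alternation p"
    unfolding p_def evens_def odds_def by (rule horizontal_alternation_append) simp_all
  moreover have "length evens \<le> length p" unfolding p_def by simp
  ultimately show ?thesis
    unfolding juxtaposition_def by (intro bexI[of _ p]) (auto intro!: exI[of _ "length evens"])
qed

lemma set_takeWhile_even:
  assumes "horizontal_alternation p"
  shows "set (takeWhile even p) = {x \<in> set p. even x}"
proof
  show "set (takeWhile even p) \<subseteq> {x \<in> set p. even x}" by (auto dest: set_takeWhileD)
  show "{x \<in> set p. even x} \<subseteq> set (takeWhile even p)"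
  proof clarify
    fix x assume "x \<in> set p" "even x"
    then obtain j where j: "j < length p" "p ! j = x" by (auto simp: in_set_conv_nth)
    define k where "k = length (takeWhile even p)"
    have "j < k"
    proof (rule ccontr)
      assume "\<not> j < k"
      moreover have "k \<noteq> j" using nth_length_takeWhile[of even p] j \<open>even x\<close> unfolding k_def by auto
      ultimately have "k < j" by simp
      moreover have "odd (p ! k)" using nth_length_takeWhile[of even p] \<open>k < j\<close> j(1) unfolding k_def by simp
      ultimately show False using assms j \<open>even x\<close> unfolding horizontal_alternation_def by auto
    qed
    then show "x \<in> set (takeWhile even p)"
      using j unfolding k_def by (metis nth_mem takeWhile_nth)
  qed
qed

lemma alternation_prefix_intervalicity:
  assumes "is_perm p" "horizontal_alternation p"
  shows "length p div 2 \<le> intervalicity (set (takeWhile even p))"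
proof -
  let ?V = "set (takeWhile even p)"
  have "(*) 2 ` {1..length p div 2} \<subseteq> ?V"
    using assms unfolding set_takeWhile_even[OF assms(2)] is_perm_def by auto
  then have "card ((*) 2 ` {1..length p div 2}) \<le> card ?V" by (rule card_mono[OF finite_set])
  then have "length p div 2 \<le> card ?V" by (simp add: card_image inj_on_def)
  also have "card ?V \<le> intervalicity ?V"
  proof (rule card_le_intervalicity)
    show "\<forall>v\<in>?V. Suc v \<notin> ?V"
    proof (intro ballI notI)
      fix v assume "v \<in> ?V" "Suc v \<in> ?V"
      then have "even v" "even (Suc v)" by (auto dest: set_takeWhileD)
      then show False by simp
    qed
  qed simp
  finally show ?thesis .
qed

lemma long_alternations_imp_unbounded_hpw:
  assumes C: "perm_class C" and alternations: "\<forall>N. \<exists>p\<in>C. horizontal_alternation p \<and> N \<le> length p"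
  shows "unbounded_hpw C"
  unfolding unbounded_hpw_iff_prefix_intervalicity
proof
  fix k
  obtain p where p: "p \<in> C" "horizontal_alternation p" "2 * k + 2 \<le> length p"
    using alternations by blast
  then have "k < intervalicity (set (take (length (takeWhile even p)) p))"
    using alternation_prefix_intervalicity[of p] C unfolding perm_class_def
    by (simp flip: takeWhile_eq_take)
  then show "\<exists>p\<in>C. \<exists>i\<le>length p. k < intervalicity (set (take i p))"
    using p(1) length_takeWhile_le by blast
qed

lemma juxtaposition_subset_imp_long_alternations:
  assumes "juxtaposition c1 c2 \<subseteq> C"
  shows "\<forall>N. \<exists>p\<in>C. horizontal_alternation p \<and> N \<le> length p"
proof
  fix N
  obtain p where "p \<in> juxtaposition c1 c2" "horizontal_alternation p" "length p = 2 * N"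
    using juxtaposition_contains_alternation by blast
  then show "\<exists>p\<in>C. horizontal_alternation p \<and> N \<le> length p" using assms by auto
qed

theorem mainTheorem9:
  assumes "perm_class C"
  shows "(unbounded_hpw C \<longleftrightarrow>
            (\<forall>N. \<exists>p \<in> C. horizontal_alternation p \<and> length p \<ge> N))
       \<and> ((\<forall>N. \<exists>p \<in> C. horizontal_alternation p \<and> length p \<ge> N) \<longleftrightarrow>
            (\<exists>c1 c2. juxtaposition c1 c2 \<subseteq> C))"
  using unbounded_hpw_imp_juxtaposition_subset[OF assms] juxtaposition_subset_imp_long_alternations
    long_alternations_imp_unbounded_hpw[OF assms] by blast

end
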